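(* Let $(X,\beta,m)$ be a non-atomic standard probability space, $\tau$ an ergodic invertible measure-preserving map of $X$, and $(\epsilon_n)_{n\ge1}$ a sequence decreasing to $0$ with $0<\epsilon_n\le1$ for all $n$. Then there is a decreasing sequence $(B_n)_{n\ge1}$ of measurable sets with $\lim_n m(B_n)=0$ and $m(B_n)\ge\epsilon_n$ for all $n$, which is an a.e. invisible measure-theoretic shrinking target for $\tau$: for a.e. $x\in X$, $\tau^n(x)\in B_n$ for only finitely many $n$.
   Context: A measure-theoretic shrinking target is a decreasing sequence of measurable sets $(B_n)$ with $m(B_n)\to0$. *)

theory Defs
  imports "HOL-Probability.Probability"
begin

definition nonatomic :: "'a measure \<Rightarrow> bool" where
  "nonatomic M \<longleftrightarrow> (\<forall>A\<in>sets M. emeasure M A > 0 \<longrightarrow>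
      (\<exists>B\<in>sets M. B \<subseteq> A \<and> 0 < emeasure M B \<and> emeasure M B < emeasure M A))"

definition standard_prob_space :: "('a::polish_space) measure \<Rightarrow> bool" where
  "standard_prob_space M \<longleftrightarrow> prob_space M \<and> sets M = sets borel"

definition mpt :: "'a measure \<Rightarrow> ('a \<Rightarrow> 'a) \<Rightarrow> bool" where
  "mpt M T \<longleftrightarrow> T \<in> M \<rightarrow>\<^sub>M M \<and> distr M M T = M"

definition invertible_mpt :: "'a measure \<Rightarrow> ('a \<Rightarrow> 'a) \<Rightarrow> bool" where
  "invertible_mpt M T \<longleftrightarrow> mpt M T \<and> bij_betw T (space M) (space M)
     \<and> mpt M (the_inv_into (space M) T)"

definition ergodic :: "'a measure \<Rightarrow> ('a \<Rightarrow> 'a) \<Rightarrow> bool" where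
  "ergodic M T \<longleftrightarrow> (\<forall>A\<in>sets M. T -` A \<inter> space M = A \<longrightarrow>
      measure M A = 0 \<or> measure M A = 1)"

end

theory Submission
  imports Defs
begin

(*
  For a set A of positive measure, ergodicity makes almost every orbit visit A, so the
  measure of the set avoiding A m of points whose orbit misses A up to time m decreases
  to 0, and it drops by at most m(A) per time step. Nonatomicity provides sets A_i so
  small, and a starting time k_i, that m(avoiding A_i (k_i + n)) stays in
  [2 q_i, 4 q_i] (q_i = 2^-(i+2)) for all n up to the time after which eps_n <= q_i.
  The target B_n is the union of the images T^n(avoiding A_i (k_i + n)): it decreases
  in n and has measure at least eps_n. If T^n x lies in B_n then the orbit of x avoids
  some A_i up to time k_i + n; by Borel-Cantelli (the measures of avoiding A_i k_i are
  summable) only finitely many i occur for almost every x, and each A_i is eventually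
  hit, which bounds n. Since m(B_n) = m(T^-n B_n), such invisibility also forces
  m(B_n) -> 0.
*)

lemma mpt_funpow:
  assumes "mpt M T"
  shows "mpt M (T ^^ n)"
proof (induction n)
  case 0
  then show ?case by (simp add: mpt_def id_def)
next
  case (Suc n)
  have T: "T \<in> M \<rightarrow>\<^sub>M M" "distr M M T = M" using assms unfolding mpt_def by auto
  have Tn: "T ^^ n \<in> M \<rightarrow>\<^sub>M M" "distr M M (T ^^ n) = M" using Suc unfolding mpt_def by auto
  have "distr M M (T ^^ Suc n) = distr (distr M M (T ^^ n)) M T"
    using distr_distr[OF T(1) Tn(1)] by simp
  then show ?case using T Tn measurable_compose_n[OF T(1)] by (simp add: mpt_def comp_def)
qed

lemma mpt_measure_preimage:
  assumes "mpt M T" "A \<in> sets M"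
  shows "measure M (T -` A \<inter> space M) = measure M A"
  using assms measure_distr[of T M M A] unfolding mpt_def by simp

lemma mpt_sets_preimage:
  assumes "mpt M T" "A \<in> sets M"
  shows "T -` A \<inter> space M \<in> sets M"
  using assms measurable_sets unfolding mpt_def by blast

lemma invertible_mpt_image:
  assumes inv: "invertible_mpt M T" and C: "C \<in> sets M"
  shows "T ` C \<in> sets M" and "measure M (T ` C) = measure M C"
proof -
  define S where "S = the_inv_into (space M) T"
  have bij: "bij_betw T (space M) (space M)" and S: "mpt M S"
    using inv unfolding invertible_mpt_def S_def by auto
  have inj: "inj_on T (space M)" using bij by (rule bij_betw_imp_inj_on)
  have C_space: "C \<subseteq> space M" using C by (rule sets.sets_into_space)
  have "T ` C = S -` C \<inter> space M"
  proof (intro equalityI subsetI)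
    fix y assume "y \<in> T ` C"
    then obtain c where "c \<in> C" "y = T c" by blast
    then show "y \<in> S -` C \<inter> space M"
      using C_space inj bij by (auto simp: S_def the_inv_into_f_f bij_betw_def)
  next
    fix y assume y: "y \<in> S -` C \<inter> space M"
    then have "y = T (S y)"
      using inj bij by (simp add: S_def f_the_inv_into_f bij_betw_def)
    then show "y \<in> T ` C" using y by blast
  qed
  then show "T ` C \<in> sets M" and "measure M (T ` C) = measure M C"
    using mpt_sets_preimage[OF S C] mpt_measure_preimage[OF S C] by simp_all
qed

lemma invertible_mpt_image_funpow:
  assumes "invertible_mpt M T" "C \<in> sets M"
  shows "(T ^^ n) ` C \<in> sets M \<and> measure M ((T ^^ n) ` C) = measure M C"
proof (induction n)
  case 0
  then show ?case using assms by simp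
next
  case (Suc n)
  then show ?case
    using invertible_mpt_image[OF assms(1), of "(T ^^ n) ` C"] by (simp add: image_comp)
qed

lemma (in finite_measure) measure_tendsto_0_if_AE_finitely_often:
  assumes A: "\<And>n. A n \<in> sets M" and fin: "AE x in M. finite {n. x \<in> A n}"
  shows "(\<lambda>n. measure M (A n)) \<longlonglongrightarrow> 0"
proof -
  define R where "R n = (\<Union>m\<in>{n..}. A m)" for n
  have R: "R n \<in> sets M" for n using A by (auto simp: R_def)
  have "(\<lambda>n. measure M (R n)) \<longlonglongrightarrow> measure M (\<Inter>n. R n)"
    using R by (intro finite_Lim_measure_decseq) (auto simp: R_def decseq_def intro: order_trans)
  moreover have "AE x in M. x \<notin> (\<Inter>n. R n)"
    using fin
  proof eventually_elim
    case (elim x)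
    then obtain k where "{n. x \<in> A n} \<subseteq> {..<k}" using finite_nat_bounded by blast
    then have "x \<notin> R k" by (auto simp: R_def)
    then show ?case by blast
  qed
  then have "(\<Inter>n. R n) \<in> null_sets M"
    using R by (subst AE_iff_null_sets) auto
  then have "measure M (\<Inter>n. R n) = 0" by (auto simp: measure_def)
  ultimately have R0: "(\<lambda>n. measure M (R n)) \<longlonglongrightarrow> 0" by simp
  have "measure M (A n) \<le> measure M (R n)" for n
    using R by (intro finite_measure_mono) (auto simp: R_def)
  then show ?thesis
    by (intro tendsto_sandwich[OF _ _ tendsto_const R0]) auto
qed

lemma (in finite_measure) invisible_target_measure_tendsto_0:
  assumes T: "mpt M T" and B: "\<And>n. B n \<in> sets M"
    and fin: "AE x in M. finite {n. (T ^^ n) x \<in> B n}"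
  shows "(\<lambda>n. measure M (B n)) \<longlonglongrightarrow> 0"
proof -
  have "(\<lambda>n. measure M ((T ^^ n) -` B n \<inter> space M)) \<longlonglongrightarrow> 0"
    using fin by (intro measure_tendsto_0_if_AE_finitely_often mpt_sets_preimage[OF mpt_funpow[OF T] B])
      (auto elim!: eventually_mono finite_subset[rotated])
  then show ?thesis using mpt_measure_preimage[OF mpt_funpow[OF T] B] by simp
qed

lemma (in prob_space) nonatomic_exists_small_set:
  assumes na: "nonatomic M" and d: "0 < d"
  shows "\<exists>A\<in>sets M. 0 < measure M A \<and> measure M A \<le> d"
proof -
  have halving: "\<exists>A\<in>sets M. 0 < measure M A \<and> measure M A \<le> (1/2) ^ k" for k
  proof (induction k)
    case 0
    show ?case by (intro bexI[of _ "space M"]) (auto simp: prob_space)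
  next
    case (Suc k)
    then obtain A where A: "A \<in> sets M" "0 < measure M A" "measure M A \<le> (1/2) ^ k" by auto
    then have "0 < emeasure M A" by (simp add: emeasure_eq_measure)
    then obtain B where B: "B \<in> sets M" "B \<subseteq> A" "0 < emeasure M B" "emeasure M B < emeasure M A"
      using na A(1) unfolding nonatomic_def by blast
    then have B': "0 < measure M B" "measure M B < measure M A"
      by (simp_all add: emeasure_eq_measure ennreal_less_iff)
    have "measure M (A - B) = measure M A - measure M B"
      using A(1) B(1,2) by (rule finite_measure_Diff)
    have "A - B \<in> sets M" using A(1) B(1) by blast
    show ?case
    proof (cases "measure M B \<le> measure M A / 2")
      case True
      then show ?thesis using A(3) B(1) B'(1) by (intro bexI[of _ B]) auto
    next
      case False
      with A(3) B'(2) have "0 < measure M (A - B) \<and> measure M (A - B) \<le> (1/2) ^ Suc k"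
        unfolding \<open>measure M (A - B) = _\<close> by simp
      then show ?thesis using \<open>A - B \<in> sets M\<close> by blast
    qed
  qed
  obtain k where k: "(1/2::real) ^ k < d"
    using real_arch_pow_inv[OF d, of "1/2"] by auto
  obtain A where "A \<in> sets M" "0 < measure M A" "measure M A \<le> (1/2) ^ k"
    using halving by blast
  then show ?thesis using k by (intro bexI[of _ A]) auto
qed

lemma exists_dyadic_bracket:
  fixes e :: real
  assumes "0 < e" "e \<le> 1"
  shows "\<exists>i. (1/2) ^ Suc i < e \<and> e \<le> (1/2) ^ i"
proof -
  obtain j where "(1/2::real) ^ j < e" using real_arch_pow_inv[OF assms(1), of "1/2"] by auto
  define i where "i = (LEAST i. (1/2::real) ^ i < e)"
  have i: "(1/2::real) ^ i < e" unfolding i_def by (rule LeastI) fact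
  then obtain i' where i': "i = Suc i'" using assms(2) by (cases i) auto
  have "\<not> (1/2::real) ^ i' < e"
    using not_less_Least[of i' "\<lambda>i. (1/2::real) ^ i < e"] i' i_def by simp
  then show ?thesis using i i' by (intro exI[of _ i']) simp
qed

locale ergodic_mps = prob_space M for M :: "'a measure" and T :: "'a \<Rightarrow> 'a" +
  assumes mpt: "mpt M T" and ergodic: "ergodic M T"
begin

lemma measurable_funpow: "T ^^ n \<in> M \<rightarrow>\<^sub>M M"
  using mpt_funpow[OF mpt] unfolding mpt_def by blast

lemma measurable_T: "T \<in> M \<rightarrow>\<^sub>M M"
  using mpt unfolding mpt_def by blast

lemma T_in_space: "x \<in> space M \<Longrightarrow> T x \<in> space M"
  using measurable_space[OF measurable_T] .

lemma funpow_in_space: "x \<in> space M \<Longrightarrow> (T ^^ n) x \<in> space M"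
  using measurable_space[OF measurable_funpow] .

definition visits_after :: "'a set \<Rightarrow> nat \<Rightarrow> 'a set" where
  "visits_after A m = {x \<in> space M. \<exists>j. (T ^^ (j + m)) x \<in> A}"

lemma sets_visits_after: "A \<in> sets M \<Longrightarrow> visits_after A m \<in> sets M"
proof -
  assume A: "A \<in> sets M"
  have "visits_after A m = (\<Union>j. (T ^^ (j + m)) -` A \<inter> space M)"
    by (auto simp: visits_after_def)
  moreover have "(\<Union>j. (T ^^ (j + m)) -` A \<inter> space M) \<in> sets M"
    using mpt_sets_preimage[OF mpt_funpow[OF mpt] A] by blast
  ultimately show ?thesis by simp
qed

lemma visits_after_Suc_subset: "visits_after A (Suc m) \<subseteq> visits_after A m"
proof
  fix x assume "x \<in> visits_after A (Suc m)"
  then obtain j where x: "x \<in> space M" "(T ^^ (j + Suc m)) x \<in> A"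
    unfolding visits_after_def by blast
  then have "(T ^^ (Suc j + m)) x \<in> A" by simp
  with x(1) show "x \<in> visits_after A m" unfolding visits_after_def by blast
qed

lemma T_in_visits_after_iff:
  "x \<in> space M \<Longrightarrow> T x \<in> visits_after A m \<longleftrightarrow> x \<in> visits_after A (Suc m)"
  using T_in_space by (simp add: visits_after_def funpow_Suc_right del: funpow.simps)

lemma measure_visits_after:
  assumes "A \<in> sets M"
  shows "measure M (visits_after A m) = measure M (visits_after A 0)"
proof -
  have "visits_after A m = (T ^^ m) -` visits_after A 0 \<inter> space M"
    using funpow_in_space by (auto simp: visits_after_def funpow_add)
  then show ?thesis
    using mpt_measure_preimage[OF mpt_funpow[OF mpt] sets_visits_after[OF assms]] by simp
qed

lemma AE_recurrent:
  assumes A: "A \<in> sets M" and pos: "0 < measure M A"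
  shows "AE x in M. \<forall>m. \<exists>j\<ge>m. (T ^^ j) x \<in> A"
proof -
  let ?V = "visits_after A"
  define U where "U = (\<Inter>m. ?V m)"
  have U_sets: "U \<in> sets M" using sets_visits_after[OF A] by (auto simp: U_def)
  have "(\<lambda>m. measure M (?V m)) \<longlonglongrightarrow> measure M U"
    unfolding U_def using sets_visits_after[OF A] visits_after_Suc_subset
    by (intro finite_Lim_measure_decseq) (auto simp: decseq_Suc_iff)
  moreover have "(\<lambda>m. measure M (?V m)) = (\<lambda>m. measure M (?V 0))"
    using measure_visits_after[OF A] by (rule ext)
  ultimately have "measure M U = measure M (?V 0)"
    by (auto intro: LIMSEQ_unique[OF _ tendsto_const])
  moreover have "A \<subseteq> ?V 0"
  proof
    fix x assume "x \<in> A"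
    then have "x \<in> space M" "(T ^^ (0 + 0)) x \<in> A" using sets.sets_into_space[OF A] by auto
    then show "x \<in> ?V 0" unfolding visits_after_def by blast
  qed
  then have "measure M A \<le> measure M (?V 0)"
    by (rule finite_measure_mono[OF _ sets_visits_after[OF A]])
  ultimately have U_pos: "0 < measure M U" using pos by linarith
  have "T -` U \<inter> space M = U"
  proof (intro equalityI subsetI)
    fix x assume "x \<in> T -` U \<inter> space M"
    then have "x \<in> ?V (Suc m)" for m
      using T_in_visits_after_iff[of x A m] by (auto simp: U_def)
    then show "x \<in> U" using visits_after_Suc_subset unfolding U_def by blast
  next
    fix x assume x: "x \<in> U"
    then have "x \<in> space M" by (auto simp: U_def visits_after_def)
    moreover have "T x \<in> ?V m" for m
      using x T_in_visits_after_iff[OF \<open>x \<in> space M\<close>] by (auto simp: U_def)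
    ultimately show "x \<in> T -` U \<inter> space M" by (auto simp: U_def)
  qed
  then have "measure M U = 0 \<or> measure M U = 1"
    using ergodic U_sets unfolding ergodic_def by simp
  then have "AE x in M. x \<in> U" using U_pos AE_in_set_eq_1[OF U_sets] by simp
  then show ?thesis
  proof eventually_elim
    case (elim x)
    show ?case
    proof
      fix m
      obtain j where "(T ^^ (j + m)) x \<in> A" using elim by (auto simp: U_def visits_after_def)
      then show "\<exists>j\<ge>m. (T ^^ j) x \<in> A" by (intro exI[of _ "j + m"]) simp
    qed
  qed
qed

definition avoiding :: "'a set \<Rightarrow> nat \<Rightarrow> 'a set" where
  "avoiding A m = {x \<in> space M. \<forall>j\<le>m. (T ^^ j) x \<notin> A}"

lemma sets_avoiding: "A \<in> sets M \<Longrightarrow> avoiding A m \<in> sets M"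
proof -
  assume A: "A \<in> sets M"
  have "avoiding A m = space M - (\<Union>j\<le>m. (T ^^ j) -` A \<inter> space M)"
    by (auto simp: avoiding_def)
  moreover have "(\<Union>j\<le>m. (T ^^ j) -` A \<inter> space M) \<in> sets M"
    using mpt_sets_preimage[OF mpt_funpow[OF mpt] A] by blast
  ultimately show ?thesis by (metis sets.compl_sets)
qed

lemma avoiding_antimono: "m \<le> m' \<Longrightarrow> avoiding A m' \<subseteq> avoiding A m"
  by (auto simp: avoiding_def)

lemma funpow_Suc_apply: "(T ^^ j) (T x) = (T ^^ Suc j) x"
  by (simp add: funpow_Suc_right del: funpow.simps)

lemma avoiding_Suc_imp: "x \<in> avoiding A (Suc m) \<Longrightarrow> T x \<in> avoiding A m"
  using funpow_in_space[of x 1] by (auto simp: avoiding_def funpow_Suc_apply)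

lemma measure_avoiding_le_Suc:
  assumes A: "A \<in> sets M"
  shows "measure M (avoiding A m) \<le> measure M (avoiding A (Suc m)) + measure M A"
proof -
  let ?H = "(T ^^ Suc m) -` A \<inter> space M"
  have H: "?H \<in> sets M" using mpt_sets_preimage[OF mpt_funpow[OF mpt] A] .
  have "avoiding A m \<subseteq> avoiding A (Suc m) \<union> ?H"
    by (auto simp: avoiding_def le_Suc_eq)
  then have "measure M (avoiding A m) \<le> measure M (avoiding A (Suc m) \<union> ?H)"
    using sets_avoiding[OF A] H by (intro finite_measure_mono) auto
  also have "\<dots> \<le> measure M (avoiding A (Suc m)) + measure M ?H"
    using sets_avoiding[OF A] H by (rule measure_Un_le)
  also have "measure M ?H = measure M A"
    using mpt_measure_preimage[OF mpt_funpow[OF mpt] A] .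
  finally show ?thesis .
qed

lemma measure_avoiding_le_add:
  assumes "A \<in> sets M"
  shows "measure M (avoiding A m) \<le> measure M (avoiding A (m + n)) + n * measure M A"
proof (induction n)
  case (Suc n)
  then show ?case
    using measure_avoiding_le_Suc[OF assms, of "m + n"] by (simp add: algebra_simps)
qed simp

lemma measure_avoiding_tendsto_0:
  assumes A: "A \<in> sets M" and pos: "0 < measure M A"
  shows "(\<lambda>m. measure M (avoiding A m)) \<longlonglongrightarrow> 0"
proof (rule measure_tendsto_0_if_AE_finitely_often)
  show "avoiding A m \<in> sets M" for m using sets_avoiding[OF A] .
  show "AE x in M. finite {m. x \<in> avoiding A m}"
    using AE_recurrent[OF A pos]
  proof eventually_elim
    case (elim x)
    then obtain j where "(T ^^ j) x \<in> A" by blast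
    then have "{m. x \<in> avoiding A m} \<subseteq> {..<j}"
      unfolding avoiding_def by (auto simp: not_less intro: ccontr)
    then show ?case by (rule finite_subset) simp
  qed
qed

lemma exists_measure_avoiding_between:
  assumes A: "A \<in> sets M" and pos: "0 < measure M A"
    and c: "0 < c" "c \<le> 1 - measure M A"
  shows "\<exists>k. c \<le> measure M (avoiding A k) \<and> measure M (avoiding A k) < c + measure M A"
proof -
  have "avoiding A 0 = space M - A" by (auto simp: avoiding_def)
  then have avoiding_0: "measure M (avoiding A 0) = 1 - measure M A"
    using prob_compl[OF A] by simp
  obtain m where m: "measure M (avoiding A m) < c"
    using order_tendstoD(2)[OF measure_avoiding_tendsto_0[OF A pos] c(1)]
    by (auto simp: eventually_sequentially)
  define m0 where "m0 = (LEAST m. measure M (avoiding A m) < c)"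
  have m0: "measure M (avoiding A m0) < c"
    unfolding m0_def using m by (rule LeastI)
  then obtain k where k: "m0 = Suc k"
    using avoiding_0 c(2) by (cases m0) auto
  have "\<not> measure M (avoiding A k) < c"
    using not_less_Least[of k "\<lambda>m. measure M (avoiding A m) < c"] k m0_def by simp
  moreover have "measure M (avoiding A k) < c + measure M A"
    using measure_avoiding_le_Suc[OF A, of k] m0 k by simp
  ultimately show ?thesis by (intro exI[of _ k]) simp
qed

lemma exists_avoiding_plateau:
  assumes na: "nonatomic M" and q: "0 < q" "4 * q \<le> 1"
  shows "\<exists>A k. A \<in> sets M \<and> 0 < measure M A \<and> measure M (avoiding A k) \<le> 4 * q \<and>
    (\<forall>n\<le>L. 2 * q \<le> measure M (avoiding A (k + n)))"
proof -
  obtain A where A: "A \<in> sets M" "0 < measure M A" "measure M A \<le> q / (L + 1)"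
    using nonatomic_exists_small_set[OF na, of "q / (L + 1)"] q(1) by auto
  have "q / (L + 1) \<le> q" using q(1) by (simp add: field_simps)
  then obtain k where k: "3 * q \<le> measure M (avoiding A k)"
    "measure M (avoiding A k) < 3 * q + measure M A"
    using exists_measure_avoiding_between[OF A(1,2), of "3 * q"] A(3) q by auto
  have "2 * q \<le> measure M (avoiding A (k + n))" if "n \<le> L" for n
  proof -
    have "n * measure M A \<le> L * (q / (L + 1))"
      using A(2,3) that by (intro mult_mono) auto
    also have "\<dots> \<le> q" using q(1) by (simp add: field_simps)
    finally show ?thesis using measure_avoiding_le_add[OF A(1), of k n] k(1) by linarith
  qed
  moreover have "measure M (avoiding A k) \<le> 4 * q"
    using k(2) A(3) \<open>q / (L + 1) \<le> q\<close> by linarith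
  ultimately show ?thesis using A(1,2) by blast
qed

end

locale invertible_ergodic_mps = ergodic_mps +
  assumes invertible: "invertible_mpt M T"
begin

definition shrinking_target :: "(nat \<Rightarrow> 'a set) \<Rightarrow> (nat \<Rightarrow> nat) \<Rightarrow> nat \<Rightarrow> 'a set" where
  "shrinking_target A k n = (\<Union>i. (T ^^ n) ` avoiding (A i) (k i + n))"

lemma shrinking_target_Suc_subset: "shrinking_target A k (Suc n) \<subseteq> shrinking_target A k n"
proof
  fix y assume "y \<in> shrinking_target A k (Suc n)"
  then obtain i x where x: "x \<in> avoiding (A i) (Suc (k i + n))" and y: "y = (T ^^ Suc n) x"
    unfolding shrinking_target_def by auto
  have "T x \<in> avoiding (A i) (k i + n)" using x by (rule avoiding_Suc_imp)
  moreover have "y = (T ^^ n) (T x)" using y by (simp add: funpow_Suc_apply)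
  ultimately show "y \<in> shrinking_target A k n" unfolding shrinking_target_def by blast
qed

lemma sets_shrinking_target:
  "(\<And>i. A i \<in> sets M) \<Longrightarrow> shrinking_target A k n \<in> sets M"
  unfolding shrinking_target_def
  using invertible_mpt_image_funpow[OF invertible sets_avoiding] by blast

lemma measure_avoiding_le_shrinking_target:
  assumes "\<And>i. A i \<in> sets M"
  shows "measure M (avoiding (A i) (k i + n)) \<le> measure M (shrinking_target A k n)"
proof -
  have "measure M (avoiding (A i) (k i + n)) = measure M ((T ^^ n) ` avoiding (A i) (k i + n))"
    using invertible_mpt_image_funpow[OF invertible sets_avoiding[OF assms]] by simp
  also have "\<dots> \<le> measure M (shrinking_target A k n)"
    using sets_shrinking_target[OF assms] by (intro finite_measure_mono) (auto simp: shrinking_target_def)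
  finally show ?thesis .
qed

lemma funpow_in_shrinking_target_iff:
  assumes x: "x \<in> space M"
  shows "(T ^^ n) x \<in> shrinking_target A k n \<longleftrightarrow> (\<exists>i. x \<in> avoiding (A i) (k i + n))"
proof -
  have "inj_on (T ^^ n) (space M)"
    using invertible bij_betw_funpow unfolding invertible_mpt_def by (metis bij_betw_imp_inj_on)
  moreover have "avoiding (A i) (k i + n) \<subseteq> space M" for i by (auto simp: avoiding_def)
  ultimately show ?thesis
    using x unfolding shrinking_target_def by (auto dest: inj_onD)
qed

lemma AE_finite_visits_shrinking_target:
  assumes A: "\<And>i. A i \<in> sets M" "\<And>i. 0 < measure M (A i)"
    and summable: "summable (\<lambda>i. measure M (avoiding (A i) (k i)))"
  shows "AE x in M. finite {n. (T ^^ n) x \<in> shrinking_target A k n}"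
proof -
  have "AE x in M. eventually (\<lambda>i. x \<in> space M - avoiding (A i) (k i)) sequentially"
    using sets_avoiding[OF A(1)] summable by (intro borel_cantelli_AE1) (auto simp: less_top[symmetric])
  moreover have "AE x in M. \<forall>i. \<exists>j. (T ^^ j) x \<in> A i"
    unfolding AE_all_countable
  proof
    fix i
    show "AE x in M. \<exists>j. (T ^^ j) x \<in> A i"
      using AE_recurrent[OF A(1)[of i] A(2)[of i]] by eventually_elim blast
  qed
  ultimately show ?thesis
  proof eventually_elim
    case (elim x)
    then have x: "x \<in> space M" by (auto simp: eventually_sequentially)
    obtain I where I: "\<And>i. I \<le> i \<Longrightarrow> x \<notin> avoiding (A i) (k i)"
      using elim(1) by (auto simp: eventually_sequentially)
    obtain j where j: "\<And>i. (T ^^ j i) x \<in> A i" using choice[OF elim(2)] by blast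
    have "n < (\<Sum>i<I. j i)" if visit: "(T ^^ n) x \<in> shrinking_target A k n" for n
    proof -
      obtain i where i: "x \<in> avoiding (A i) (k i + n)"
        using visit funpow_in_shrinking_target_iff[OF x] by blast
      then have "x \<in> avoiding (A i) (k i)" using avoiding_antimono[of "k i" "k i + n"] by auto
      then have "i < I" using I[of i] by (cases "I \<le> i") auto
      have "k i + n < j i" using i j[of i] by (auto simp: avoiding_def not_less intro: ccontr)
      moreover have "j i \<le> (\<Sum>i<I. j i)" using \<open>i < I\<close> by (intro member_le_sum) auto
      ultimately show ?thesis by linarith
    qed
    then have "{n. (T ^^ n) x \<in> shrinking_target A k n} \<subseteq> {..<(\<Sum>i<I. j i)}" by blast
    then show ?case by (rule finite_subset) simp
  qed
qed

lemma exists_invisible_shrinking_target_le_half: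
  assumes na: "nonatomic M" and \<epsilon>: "\<epsilon> \<longlonglongrightarrow> 0" "\<And>n. \<epsilon> n \<le> 1/2"
  shows "\<exists>B. (\<forall>n. B n \<in> sets M) \<and> (\<forall>n. B (Suc n) \<subseteq> B n) \<and>
    (\<lambda>n. measure M (B n)) \<longlonglongrightarrow> 0 \<and> (\<forall>n. \<epsilon> n \<le> measure M (B n)) \<and>
    (AE x in M. finite {n. (T ^^ n) x \<in> B n})"
proof -
  define q :: "nat \<Rightarrow> real" where "q i = (1/2) ^ (i + 2)" for i
  have q: "0 < q i" "4 * q i \<le> 1" for i
    unfolding q_def by (simp_all add: power_add power_le_one)
  have "\<forall>i. \<exists>L. \<forall>n\<ge>L. \<epsilon> n \<le> q i"
    using \<epsilon>(1) q(1) by (metis eventually_sequentially less_imp_le order_tendstoD(2))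
  then obtain L where L: "\<And>i n. L i \<le> n \<Longrightarrow> \<epsilon> n \<le> q i" by metis
  have "\<forall>i. \<exists>A k. A \<in> sets M \<and> 0 < measure M A \<and> measure M (avoiding A k) \<le> 4 * q i \<and>
      (\<forall>n\<le>L i. 2 * q i \<le> measure M (avoiding A (k + n)))"
    using exists_avoiding_plateau[OF na q] by blast
  then obtain A k where A: "\<And>i. A i \<in> sets M" "\<And>i. 0 < measure M (A i)"
    and start: "\<And>i. measure M (avoiding (A i) (k i)) \<le> 4 * q i"
    and plateau: "\<And>i n. n \<le> L i \<Longrightarrow> 2 * q i \<le> measure M (avoiding (A i) (k i + n))"
    by metis
  define B where "B = shrinking_target A k"
  have "summable (\<lambda>i. 4 * q i)" unfolding q_def by (simp add: power_add summable_geometric)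
  then have "summable (\<lambda>i. measure M (avoiding (A i) (k i)))"
    by (rule summable_comparison_test') (simp add: start)
  then have invisible: "AE x in M. finite {n. (T ^^ n) x \<in> B n}"
    unfolding B_def by (rule AE_finite_visits_shrinking_target[OF A])
  have B_sets: "B n \<in> sets M" for n
    unfolding B_def using A(1) by (rule sets_shrinking_target)
  have "\<epsilon> n \<le> measure M (B n)" for n
  proof (cases "\<epsilon> n \<le> 0")
    case False
    then obtain i where "(1/2) ^ Suc i < 2 * \<epsilon> n" "2 * \<epsilon> n \<le> (1/2) ^ i"
      using exists_dyadic_bracket[of "2 * \<epsilon> n"] \<epsilon>(2)[of n] by auto
    moreover have "(1/2::real) ^ Suc i = 2 * q i" "(1/2::real) ^ i = 4 * q i"
      by (simp_all add: q_def power_add)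
    ultimately have i: "q i < \<epsilon> n" "\<epsilon> n \<le> 2 * q i" by linarith+
    then have "n \<le> L i" using L[of i n] by linarith
    then show ?thesis
      using i(2) plateau measure_avoiding_le_shrinking_target[OF A(1)] unfolding B_def
      by (meson order_trans)
  qed (use measure_nonneg[of M "B n"] in linarith)
  moreover have "B (Suc n) \<subseteq> B n" for n
    unfolding B_def by (rule shrinking_target_Suc_subset)
  moreover have "(\<lambda>n. measure M (B n)) \<longlonglongrightarrow> 0"
    using mpt B_sets invisible by (rule invisible_target_measure_tendsto_0)
  ultimately show ?thesis using B_sets invisible by blast
qed

lemma exists_invisible_shrinking_target:
  assumes na: "nonatomic M" and \<epsilon>: "\<epsilon> \<longlonglongrightarrow> 0" "\<And>n. \<epsilon> n \<le> 1"
  shows "\<exists>B. (\<forall>n. B n \<in> sets M) \<and> (\<forall>n. B (Suc n) \<subseteq> B n) \<and>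
    (\<lambda>n. measure M (B n)) \<longlonglongrightarrow> 0 \<and> (\<forall>n. \<epsilon> n \<le> measure M (B n)) \<and>
    (AE x in M. finite {n. (T ^^ n) x \<in> B n})"
proof -
  obtain N where N: "\<And>n. N \<le> n \<Longrightarrow> \<epsilon> n \<le> 1/2"
    using order_tendstoD(2)[OF \<epsilon>(1), of "1/2"]
    by (auto simp: eventually_sequentially intro: less_imp_le)
  have "(\<lambda>n. min (\<epsilon> n) (1/2)) \<longlonglongrightarrow> 0"
    using tendsto_min[OF \<epsilon>(1) tendsto_const, of "1/2"] by simp
  then obtain B where B_sets: "\<And>n. B n \<in> sets M" and B_Suc: "\<And>n. B (Suc n) \<subseteq> B n"
    and B_tendsto: "(\<lambda>n. measure M (B n)) \<longlonglongrightarrow> 0"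
    and B_large: "\<And>n. min (\<epsilon> n) (1/2) \<le> measure M (B n)"
    and B_invisible: "AE x in M. finite {n. (T ^^ n) x \<in> B n}"
    using exists_invisible_shrinking_target_le_half[OF na _ min.cobounded2] by blast
  define B' where "B' n = (if n < N then space M else B n)" for n
  have "B' n \<in> sets M" for n by (simp add: B'_def B_sets)
  moreover have "B' (Suc n) \<subseteq> B' n" for n
    using B_Suc sets.sets_into_space[OF B_sets] by (auto simp: B'_def)
  moreover have "(\<lambda>n. measure M (B' n)) \<longlonglongrightarrow> 0"
    using B_tendsto
    by (rule Lim_transform_eventually) (auto simp: B'_def eventually_sequentially intro!: exI[of _ N])
  moreover have "\<epsilon> n \<le> measure M (B' n)" for n
    using \<epsilon>(2)[of n] N[of n] B_large[of n] by (auto simp: B'_def prob_space)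
  moreover have "AE x in M. finite {n. (T ^^ n) x \<in> B' n}"
    using B_invisible
  proof eventually_elim
    case (elim x)
    have "{n. (T ^^ n) x \<in> B' n} \<subseteq> {..<N} \<union> {n. (T ^^ n) x \<in> B n}"
      by (auto simp: B'_def)
    then show ?case by (rule finite_subset) (simp add: elim)
  qed
  ultimately show ?thesis by blast
qed

end

theorem mainTheorem8:
  fixes M :: "('a::polish_space) measure" and T :: "'a \<Rightarrow> 'a" and \<epsilon> :: "nat \<Rightarrow> real"
  assumes "standard_prob_space M" and "nonatomic M"
    and "invertible_mpt M T" and "ergodic M T"
    and "\<forall>n\<ge>1. \<epsilon> (Suc n) \<le> \<epsilon> n" and "\<epsilon> \<longlonglongrightarrow> 0"
    and "\<forall>n\<ge>1. 0 < \<epsilon> n \<and> \<epsilon> n \<le> 1"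
  shows "\<exists>B :: nat \<Rightarrow> 'a set.
           (\<forall>n\<ge>1. B n \<in> sets M) \<and>
           (\<forall>n\<ge>1. B (Suc n) \<subseteq> B n) \<and>
           (\<lambda>n. measure M (B n)) \<longlonglongrightarrow> 0 \<and>
           (\<forall>n\<ge>1. measure M (B n) \<ge> \<epsilon> n) \<and>
           (AE x in M. finite {n. n \<ge> 1 \<and> (T ^^ n) x \<in> B n})"
proof -
  interpret invertible_ergodic_mps M T
  proof (intro invertible_ergodic_mps.intro ergodic_mps.intro invertible_ergodic_mps_axioms.intro
      ergodic_mps_axioms.intro)
    show "prob_space M" using assms(1) unfolding standard_prob_space_def by blast
    show "mpt M T" using assms(3) unfolding invertible_mpt_def by blast
  qed (fact assms)+
  have "(\<lambda>n. min (\<epsilon> n) 1) \<longlonglongrightarrow> 0"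
    using tendsto_min[OF assms(6) tendsto_const, of 1] by simp
  then obtain B where "\<forall>n. B n \<in> sets M" "\<forall>n. B (Suc n) \<subseteq> B n"
    "(\<lambda>n. measure M (B n)) \<longlonglongrightarrow> 0" and large: "\<forall>n. min (\<epsilon> n) 1 \<le> measure M (B n)"
    and invisible: "AE x in M. finite {n. (T ^^ n) x \<in> B n}"
    using exists_invisible_shrinking_target[OF assms(2) _ min.cobounded2] by blast
  moreover have "\<epsilon> n \<le> measure M (B n)" if "n \<ge> 1" for n
    using assms(7)[rule_format, OF that] large[rule_format, of n] by (simp add: min_absorb1)
  moreover have "AE x in M. finite {n. n \<ge> 1 \<and> (T ^^ n) x \<in> B n}"
    using invisible by eventually_elim (auto elim: finite_subset[rotated])
  ultimately show ?thesis by blast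
qed

end
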